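(* Let $(\Omega,\mathcal{F})$ be a measurable space, $\mathrm{B}_b$ the space of bounded real-valued measurable functions, $C\subset\mathrm{B}_b$ a linear subspace containing the constants, and $H\colon C\to\mathbb{R}$ a convex map with $H(X+m)=H(X)+m$ for all $X\in C$, $m\in\mathbb{R}$. Then the following are equivalent: (i) $H$ is a monotone premium principle; (ii) $H(0)=0$ and $H(X)\le 0$ for all $X\in C$ with $X\le 0$.
   Context: A premium principle is a map $H\colon C\to\mathbb{R}$ with $H(X+m)=H(X)+m$ for $X\in C$, $m\in\mathbb{R}$, $H(0)=0$, and $H(X)\ge0$ for $X\in C$ with $X\ge0$, where $\le$ is the pointwise order. Monotone means $H(X)\le H(Y)$ whenever $X,Y\in C$, $X\le Y$. Convex means $H(\lambda X+(1-\lambda)Y)\le\lambda H(X)+(1-\lambda)H(Y)$ for $\lambda\in[0,1]$. *)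

theory Defs
  imports "HOL-Analysis.Analysis"
begin

definition bounded_measurable :: "'a measure \<Rightarrow> ('a \<Rightarrow> real) set" where
  "bounded_measurable M = {X \<in> borel_measurable M. bounded (X ` space M)}"

definition pw_le :: "'a measure \<Rightarrow> ('a \<Rightarrow> real) \<Rightarrow> ('a \<Rightarrow> real) \<Rightarrow> bool" where
  "pw_le M X Y = (\<forall>\<omega>\<in>space M. X \<omega> \<le> Y \<omega>)"

definition linear_subspace_with_constants :: "('a \<Rightarrow> real) set \<Rightarrow> bool" where
  "linear_subspace_with_constants C =
     ((\<forall>X\<in>C. \<forall>Y\<in>C. (\<lambda>\<omega>. X \<omega> + Y \<omega>) \<in> C) \<and>
      (\<forall>X\<in>C. \<forall>c::real. (\<lambda>\<omega>. c * X \<omega>) \<in> C) \<and>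
      (\<forall>m::real. (\<lambda>_. m) \<in> C))"

definition cash_additive :: "('a \<Rightarrow> real) set \<Rightarrow> (('a \<Rightarrow> real) \<Rightarrow> real) \<Rightarrow> bool" where
  "cash_additive C H = (\<forall>X\<in>C. \<forall>m::real. H (\<lambda>\<omega>. X \<omega> + m) = H X + m)"

definition premium_principle ::
  "'a measure \<Rightarrow> ('a \<Rightarrow> real) set \<Rightarrow> (('a \<Rightarrow> real) \<Rightarrow> real) \<Rightarrow> bool" where
  "premium_principle M C H =
     (cash_additive C H \<and> H (\<lambda>_. 0) = 0 \<and>
      (\<forall>X\<in>C. pw_le M (\<lambda>_. 0) X \<longrightarrow> H X \<ge> 0))"

definition monotone_map ::
  "'a measure \<Rightarrow> ('a \<Rightarrow> real) set \<Rightarrow> (('a \<Rightarrow> real) \<Rightarrow> real) \<Rightarrow> bool" where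
  "monotone_map M C H = (\<forall>X\<in>C. \<forall>Y\<in>C. pw_le M X Y \<longrightarrow> H X \<le> H Y)"

definition convex_map :: "('a \<Rightarrow> real) set \<Rightarrow> (('a \<Rightarrow> real) \<Rightarrow> real) \<Rightarrow> bool" where
  "convex_map C H = (\<forall>X\<in>C. \<forall>Y\<in>C. \<forall>l::real. 0 \<le> l \<and> l \<le> 1 \<longrightarrow>
      H (\<lambda>\<omega>. l * X \<omega> + (1 - l) * Y \<omega>) \<le> l * H X + (1 - l) * H Y)"

end

theory Submission
  imports Defs
begin

text \<open>
  Only monotonicity in (ii) \<Longrightarrow> (i) needs an argument. For \<open>X \<le> Y\<close> and \<open>0 < \<lambda> < 1\<close>
  write \<open>X = \<lambda> (Y/\<lambda>) + (1 - \<lambda>) ((X - Y)/(1 - \<lambda>))\<close>; the second summand is \<open>\<le> 0\<close>, so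
  convexity gives \<open>H X \<le> \<lambda> H (Y/\<lambda>)\<close>. Convexity of \<open>t \<mapsto> H (t Y)\<close> on \<open>[1, 2]\<close> bounds
  the right-hand side by \<open>H Y + (1 - \<lambda>) (H (2Y) - 2 H Y)\<close>, and \<open>\<lambda> \<rightarrow> 1\<close> yields
  \<open>H X \<le> H Y\<close>.
\<close>

lemma le_of_le_plus_mult_small:
  fixes a b c :: real
  assumes "\<And>e. 0 < e \<Longrightarrow> e < 1 / 2 \<Longrightarrow> a \<le> b + e * c"
  shows "a \<le> b"
proof (rule tendsto_lowerbound)
  show "((\<lambda>e. b + e * c) \<longlongrightarrow> b) (at_right 0)"
    by (auto intro!: tendsto_eq_intros)
  show "eventually (\<lambda>e. a \<le> b + e * c) (at_right 0)"
  proof -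
    have "eventually (\<lambda>e. e \<in> {0<..<1 / 2}) (at_right (0::real))"
      by (rule eventually_at_right_real) simp
    then show ?thesis
      by eventually_elim (use assms in auto)
  qed
qed simp

lemma convex_mapD:
  assumes "convex_map C H" and "X \<in> C" and "Y \<in> C" and "0 \<le> l" and "l \<le> 1"
  shows "H (\<lambda>\<omega>. l * X \<omega> + (1 - l) * Y \<omega>) \<le> l * H X + (1 - l) * H Y"
  using assms unfolding convex_map_def by blast

lemma convex_map_on_ray:
  assumes "convex_map C H" and "Y \<in> C" and "(\<lambda>\<omega>. 2 * Y \<omega>) \<in> C"
    and "1 \<le> t" and "t \<le> 2"
  shows "H (\<lambda>\<omega>. t * Y \<omega>) \<le> (2 - t) * H Y + (t - 1) * H (\<lambda>\<omega>. 2 * Y \<omega>)"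
proof -
  have "(\<lambda>\<omega>. t * Y \<omega>) = (\<lambda>\<omega>. (2 - t) * Y \<omega> + (1 - (2 - t)) * (2 * Y \<omega>))"
    by (auto simp: algebra_simps)
  then show ?thesis
    using convex_mapD[OF assms(1-3), of "2 - t"] assms(4,5) by simp
qed

lemma convex_map_le_scaled:
  assumes add: "\<And>X Y. X \<in> C \<Longrightarrow> Y \<in> C \<Longrightarrow> (\<lambda>\<omega>. X \<omega> + Y \<omega>) \<in> C"
    and scale: "\<And>X c. X \<in> C \<Longrightarrow> (\<lambda>\<omega>. c * X \<omega>) \<in> C"
    and "convex_map C H"
    and nonpos: "\<And>W. W \<in> C \<Longrightarrow> pw_le M W (\<lambda>_. 0) \<Longrightarrow> H W \<le> 0"
    and X: "X \<in> C" and Y: "Y \<in> C" and "pw_le M X Y"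
    and "0 < l" and "l < 1"
  shows "H X \<le> l * H (\<lambda>\<omega>. (1 / l) * Y \<omega>)"
proof -
  define A where "A = (\<lambda>\<omega>. (1 / l) * Y \<omega>)"
  define B where "B = (\<lambda>\<omega>. (1 / (1 - l)) * (X \<omega> + (-1) * Y \<omega>))"
  have A: "A \<in> C" and B: "B \<in> C"
    unfolding A_def B_def by (rule scale[OF Y], rule scale[OF add[OF X scale[OF Y]]])
  have "pw_le M B (\<lambda>_. 0)"
    using \<open>pw_le M X Y\<close> \<open>l < 1\<close> unfolding pw_le_def B_def
    by (auto intro!: divide_nonpos_pos)
  then have "(1 - l) * H B \<le> 0"
    using nonpos[OF B] \<open>l < 1\<close> by (simp add: mult_nonneg_nonpos)
  moreover have "X = (\<lambda>\<omega>. l * A \<omega> + (1 - l) * B \<omega>)"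
    using \<open>0 < l\<close> \<open>l < 1\<close> by (auto simp: A_def B_def)
  then have "H X \<le> l * H A + (1 - l) * H B"
    using convex_mapD[OF \<open>convex_map C H\<close> A B] \<open>0 < l\<close> \<open>l < 1\<close> by simp
  ultimately show ?thesis
    unfolding A_def by linarith
qed

lemma convex_map_monotone:
  assumes add: "\<And>X Y. X \<in> C \<Longrightarrow> Y \<in> C \<Longrightarrow> (\<lambda>\<omega>. X \<omega> + Y \<omega>) \<in> C"
    and scale: "\<And>X c. X \<in> C \<Longrightarrow> (\<lambda>\<omega>. c * X \<omega>) \<in> C"
    and convex: "convex_map C H"
    and nonpos: "\<And>W. W \<in> C \<Longrightarrow> pw_le M W (\<lambda>_. 0) \<Longrightarrow> H W \<le> 0"
  shows "monotone_map M C H"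
  unfolding monotone_map_def
proof (intro ballI impI)
  fix X Y assume X: "X \<in> C" and Y: "Y \<in> C" and "pw_le M X Y"
  show "H X \<le> H Y"
  proof (rule le_of_le_plus_mult_small)
    fix e :: real assume "0 < e" "e < 1 / 2"
    define l where "l = 1 - e"
    have l: "0 < l" "l < 1" and "1 \<le> 1 / l" "1 / l \<le> 2"
      using \<open>0 < e\<close> \<open>e < 1 / 2\<close> by (auto simp: l_def field_simps)
    have "H X \<le> l * H (\<lambda>\<omega>. (1 / l) * Y \<omega>)"
      by (rule convex_map_le_scaled[OF add scale convex nonpos X Y \<open>pw_le M X Y\<close> l])
    also have "\<dots> \<le> l * ((2 - 1 / l) * H Y + (1 / l - 1) * H (\<lambda>\<omega>. 2 * Y \<omega>))"
      using convex_map_on_ray[OF convex Y scale[OF Y] \<open>1 \<le> 1 / l\<close> \<open>1 / l \<le> 2\<close>] l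
      by (simp add: mult_left_mono)
    also have "\<dots> = (2 * l - 1) * H Y + (1 - l) * H (\<lambda>\<omega>. 2 * Y \<omega>)"
      using l by (simp add: algebra_simps)
    also have "\<dots> = H Y + e * (H (\<lambda>\<omega>. 2 * Y \<omega>) - 2 * H Y)"
      by (simp add: l_def algebra_simps)
    finally show "H X \<le> H Y + e * (H (\<lambda>\<omega>. 2 * Y \<omega>) - 2 * H Y)" .
  qed
qed

theorem proposition3p7:
  fixes M :: "'a measure" and C :: "('a \<Rightarrow> real) set" and H :: "('a \<Rightarrow> real) \<Rightarrow> real"
  assumes "C \<subseteq> bounded_measurable M"
    and "linear_subspace_with_constants C"
    and "convex_map C H"
    and "cash_additive C H"
  shows "(premium_principle M C H \<and> monotone_map M C H) \<longleftrightarrow>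
         (H (\<lambda>_. 0) = 0 \<and> (\<forall>X\<in>C. pw_le M X (\<lambda>_. 0) \<longrightarrow> H X \<le> 0))"
proof -
  have zero: "(\<lambda>_. 0) \<in> C"
    using assms(2) unfolding linear_subspace_with_constants_def by blast
  have "monotone_map M C H" if "\<forall>X\<in>C. pw_le M X (\<lambda>_. 0) \<longrightarrow> H X \<le> 0"
    using convex_map_monotone[OF _ _ assms(3)] assms(2) that
    unfolding linear_subspace_with_constants_def by blast
  with zero assms(4) show ?thesis
    unfolding premium_principle_def monotone_map_def by fastforce
qed

end
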